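(* For a subset $C\subseteq L$, the following are equivalent: (i) $C$ is $\mathbf{u}$-compatible; (ii) there exists a (not necessarily straight) road map $(\{H^\alpha_p\},\{V^\beta_q\})$ such that for every $k=1,\dots,r$, $$C|_k\subseteq\Big(\bigcup_{p=1}^{u_{\mathrm{t}(h_k)}}H^{\mathrm{t}(h_k)}_p|_k\Big)\cap\Big(\bigcup_{q=1}^{u_{\mathrm{s}(h_k)}}V^{\mathrm{s}(h_k)}_q|_k\Big).$$
   Context: Let $\mathcal{Q}$ be a bipartite quiver with vertex set $V_{\mathcal{Q}}=V_{\rm source}\sqcup V_{\rm target}$ and arrows $h_1,\dots,h_r$, each $h_k$ from $\mathrm{s}(h_k)\in V_{\rm source}$ to $\mathrm{t}(h_k)\in V_{\rm target}$. Let $\mathbf{m}=(m_\gamma)$, $\mathbf{u}=(u_\gamma)$ be tuples of nonnegative integers indexed by $V_{\mathcal{Q}}$. For $k=1,\dots,r$ let $X^{(k)}$ be an $m_{\mathrm{t}(h_k)}\times m_{\mathrm{s}(h_k)}$ matrix of variables $x^{(k)}_{ij}$; page $k$ is the grid $[1,m_{\mathrm{t}(h_k)}]\times[1,m_{\mathrm{s}(h_k)}]$. For $\alpha\in V_{\rm target}$ with $r_1<\dots<r_s$ the indices of arrows with target $\alpha$, $A_\alpha=[X^{(r_1)}|\cdots|X^{(r_s)}]$; for $\beta\in V_{\rm source}$ with $r'_1<\dots<r'_t$ the indices of arrows with source $\beta$, $A_\beta$ is the stack of $X^{(r'_1)},\dots,X^{(r'_t)}$ top to bottom. $a_\gamma\times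 b_\gamma$ is the size of $A_\gamma$; $v_\alpha=\sum_{k:\mathrm{t}(h_k)=\alpha}u_{\mathrm{s}(h_k)}$, $v_\beta=\sum_{k:\mathrm{s}(h_k)=\beta}u_{\mathrm{t}(h_k)}$. Standing assumption: $0<u_\gamma\le\min(a_\gamma,b_\gamma)$, $u_\alpha\le v_\alpha$, $u_\beta\le v_\beta$. $L=\{(i,j,k)\in\mathbb{Z}^3:1\le k\le r,\ (i,j)\text{ in page }k\}$; for $C\subseteq L$, $C|_k=\{(i,j):(i,j,k)\in C\}$. $\phi_\gamma$ sends a position $(p,q)$ of $A_\gamma$ to $(i,j,k)$ if that entry is $x^{(k)}_{ij}$; $C^\gamma=\phi_\gamma^{-1}(C)$. Coordinates $(i,j)$: $i$ row (downward, north = decreasing $i$), $j$ column (eastward). A diagonal chain of size $s$ is $\{(i_1,j_1),\dots,(i_s,j_s)\}$ with $i_1<\dots<i_s$, $j_1<\dots<j_s$. $C$ is $\mathbf{u}$-compatible if no $C^\gamma$ contains a diagonal chain of size $u_\gamma+1$. A path is a lattice path with unit steps going east $(0,1)$ or north $(-1,0)$ from its SW endpoint to its NE endpoint; nonintersecting = no shared vertex. A road map consists of, for each $\alpha\in V_{\rm target}$, nonintersecting paths $H^\alpha_1,\dots,H^\alpha_{u_\alpha}$ in the grid of $A_\alpha$, $H^\alpha_p$ with endpoints $(a_\alpha-u_\alpha+p,1)$, $(p,b_\alpha)$, and for each $\beta\in V_{\rm source}$ nonintersecting paths $V^\beta_1,\dots,V^\beta_{u_\beta}$ in the grid of $A_\beta$,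 $V^\beta_q$ with endpoints $(1,b_\beta-u_\beta+q)$, $(a_\beta,q)$. For a path $H$ in $A_\gamma$, $H|_k$ denotes the set of its lattice points lying in the block of page $k$, written in page-$k$ coordinates. *)

theory Defs
  imports Main
begin

(* Bipartite quiver data: arrows h_1..h_r, h_k : s k -> t k, s k in V_source, t k in V_target.
   Page k is the grid [1, m (t k)] x [1, m (s k)]. Coordinates are (row, column). *)

definition L_set :: "nat \<Rightarrow> (nat \<Rightarrow> 'v) \<Rightarrow> (nat \<Rightarrow> 'v) \<Rightarrow> ('v \<Rightarrow> nat) \<Rightarrow> (nat \<times> nat \<times> nat) set" where
  "L_set r s t m = {(i, j, k). 1 \<le> k \<and> k \<le> r \<and> 1 \<le> i \<and> i \<le> m (t k) \<and> 1 \<le> j \<and> j \<le> m (s k)}"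

definition in_page :: "(nat \<Rightarrow> 'v) \<Rightarrow> (nat \<Rightarrow> 'v) \<Rightarrow> ('v \<Rightarrow> nat) \<Rightarrow> nat \<Rightarrow> nat \<times> nat \<Rightarrow> bool" where
  "in_page s t m k p \<longleftrightarrow> 1 \<le> fst p \<and> fst p \<le> m (t k) \<and> 1 \<le> snd p \<and> snd p \<le> m (s k)"

definition restr :: "(nat \<times> nat \<times> nat) set \<Rightarrow> nat \<Rightarrow> (nat \<times> nat) set" where
  "restr C k = {(i, j). (i, j, k) \<in> C}"

(* --- target vertex alpha: A_alpha = [X^(r_1) | ... | X^(r_s)] --- *)
definition a_tgt :: "('v \<Rightarrow> nat) \<Rightarrow> 'v \<Rightarrow> nat" where
  "a_tgt m \<alpha> = m \<alpha>"

definition b_tgt :: "nat \<Rightarrow> (nat \<Rightarrow> 'v) \<Rightarrow> (nat \<Rightarrow> 'v) \<Rightarrow> ('v \<Rightarrow> nat) \<Rightarrow> 'v \<Rightarrow> nat" where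
  "b_tgt r s t m \<alpha> = (\<Sum>k\<in>{k\<in>{1..r}. t k = \<alpha>}. m (s k))"

(* column offset of the block of page k inside A_(t k) *)
definition coff :: "(nat \<Rightarrow> 'v) \<Rightarrow> (nat \<Rightarrow> 'v) \<Rightarrow> ('v \<Rightarrow> nat) \<Rightarrow> nat \<Rightarrow> nat" where
  "coff s t m k = (\<Sum>j\<in>{j\<in>{1..<k}. t j = t k}. m (s j))"

definition v_tgt :: "nat \<Rightarrow> (nat \<Rightarrow> 'v) \<Rightarrow> (nat \<Rightarrow> 'v) \<Rightarrow> ('v \<Rightarrow> nat) \<Rightarrow> 'v \<Rightarrow> nat" where
  "v_tgt r s t u \<alpha> = (\<Sum>k\<in>{k\<in>{1..r}. t k = \<alpha>}. u (s k))"

(* C^alpha = phi_alpha^{-1}(C): phi_alpha maps (p, coff k + j) to (p, j, k) *)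
definition C_tgt :: "nat \<Rightarrow> (nat \<Rightarrow> 'v) \<Rightarrow> (nat \<Rightarrow> 'v) \<Rightarrow> ('v \<Rightarrow> nat) \<Rightarrow> (nat \<times> nat \<times> nat) set \<Rightarrow> 'v \<Rightarrow> (nat \<times> nat) set" where
  "C_tgt r s t m C \<alpha> = {(p, q). \<exists>i j k. (i, j, k) \<in> C \<and> (i, j, k) \<in> L_set r s t m \<and> t k = \<alpha>
                                  \<and> p = i \<and> q = coff s t m k + j}"

(* --- source vertex beta: A_beta = X^(r'_1) stacked over ... over X^(r'_t) --- *)
definition a_src :: "nat \<Rightarrow> (nat \<Rightarrow> 'v) \<Rightarrow> (nat \<Rightarrow> 'v) \<Rightarrow> ('v \<Rightarrow> nat) \<Rightarrow> 'v \<Rightarrow> nat" where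
  "a_src r s t m \<beta> = (\<Sum>k\<in>{k\<in>{1..r}. s k = \<beta>}. m (t k))"

definition b_src :: "('v \<Rightarrow> nat) \<Rightarrow> 'v \<Rightarrow> nat" where
  "b_src m \<beta> = m \<beta>"

(* row offset of the block of page k inside A_(s k) *)
definition roff :: "(nat \<Rightarrow> 'v) \<Rightarrow> (nat \<Rightarrow> 'v) \<Rightarrow> ('v \<Rightarrow> nat) \<Rightarrow> nat \<Rightarrow> nat" where
  "roff s t m k = (\<Sum>j\<in>{j\<in>{1..<k}. s j = s k}. m (t j))"

definition v_src :: "nat \<Rightarrow> (nat \<Rightarrow> 'v) \<Rightarrow> (nat \<Rightarrow> 'v) \<Rightarrow> ('v \<Rightarrow> nat) \<Rightarrow> 'v \<Rightarrow> nat" where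
  "v_src r s t u \<beta> = (\<Sum>k\<in>{k\<in>{1..r}. s k = \<beta>}. u (t k))"

definition C_src :: "nat \<Rightarrow> (nat \<Rightarrow> 'v) \<Rightarrow> (nat \<Rightarrow> 'v) \<Rightarrow> ('v \<Rightarrow> nat) \<Rightarrow> (nat \<times> nat \<times> nat) set \<Rightarrow> 'v \<Rightarrow> (nat \<times> nat) set" where
  "C_src r s t m C \<beta> = {(p, q). \<exists>i j k. (i, j, k) \<in> C \<and> (i, j, k) \<in> L_set r s t m \<and> s k = \<beta>
                                  \<and> p = roff s t m k + i \<and> q = j}"

definition diag_chain :: "(nat \<times> nat) set \<Rightarrow> bool" where
  "diag_chain D \<longleftrightarrow> (\<forall>x\<in>D. \<forall>y\<in>D. x \<noteq> y \<longrightarrow>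
       (fst x < fst y \<and> snd x < snd y) \<or> (fst y < fst x \<and> snd y < snd x))"

definition has_diag_chain :: "nat \<Rightarrow> (nat \<times> nat) set \<Rightarrow> bool" where
  "has_diag_chain n S \<longleftrightarrow> (\<exists>D. D \<subseteq> S \<and> finite D \<and> card D = n \<and> diag_chain D)"

definition u_compatible ::
  "'v set \<Rightarrow> 'v set \<Rightarrow> nat \<Rightarrow> (nat \<Rightarrow> 'v) \<Rightarrow> (nat \<Rightarrow> 'v) \<Rightarrow> ('v \<Rightarrow> nat) \<Rightarrow> ('v \<Rightarrow> nat)
     \<Rightarrow> (nat \<times> nat \<times> nat) set \<Rightarrow> bool" where
  "u_compatible Vs Vt r s t m u C \<longleftrightarrow>
     (\<forall>\<alpha>\<in>Vt. \<not> has_diag_chain (u \<alpha> + 1) (C_tgt r s t m C \<alpha>)) \<and>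
     (\<forall>\<beta>\<in>Vs. \<not> has_diag_chain (u \<beta> + 1) (C_src r s t m C \<beta>))"

(* lattice paths, listed from SW endpoint to NE endpoint; unit steps east (0,1) or north (-1,0) *)
definition lattice_path :: "(nat \<times> nat) list \<Rightarrow> bool" where
  "lattice_path xs \<longleftrightarrow> xs \<noteq> [] \<and>
     (\<forall>n. Suc n < length xs \<longrightarrow>
        (fst (xs ! Suc n) = fst (xs ! n) \<and> snd (xs ! Suc n) = Suc (snd (xs ! n))) \<or>
        (Suc (fst (xs ! Suc n)) = fst (xs ! n) \<and> snd (xs ! Suc n) = snd (xs ! n)))"

definition in_grid :: "nat \<Rightarrow> nat \<Rightarrow> (nat \<times> nat) list \<Rightarrow> bool" where
  "in_grid a b xs \<longleftrightarrow> (\<forall>(i, j)\<in>set xs. 1 \<le> i \<and> i \<le> a \<and> 1 \<le> j \<and> j \<le> b)"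

(* H|_k for a path H in A_(t k), resp. V|_k for a path V in A_(s k), in page-k coordinates *)
definition restr_tgt_path :: "(nat \<Rightarrow> 'v) \<Rightarrow> (nat \<Rightarrow> 'v) \<Rightarrow> ('v \<Rightarrow> nat) \<Rightarrow> (nat \<times> nat) list \<Rightarrow> nat \<Rightarrow> (nat \<times> nat) set" where
  "restr_tgt_path s t m H k = {(i, j). in_page s t m k (i, j) \<and> (i, coff s t m k + j) \<in> set H}"

definition restr_src_path :: "(nat \<Rightarrow> 'v) \<Rightarrow> (nat \<Rightarrow> 'v) \<Rightarrow> ('v \<Rightarrow> nat) \<Rightarrow> (nat \<times> nat) list \<Rightarrow> nat \<Rightarrow> (nat \<times> nat) set" where
  "restr_src_path s t m V k = {(i, j). in_page s t m k (i, j) \<and> (roff s t m k + i, j) \<in> set V}"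

definition road_map ::
  "'v set \<Rightarrow> 'v set \<Rightarrow> nat \<Rightarrow> (nat \<Rightarrow> 'v) \<Rightarrow> (nat \<Rightarrow> 'v) \<Rightarrow> ('v \<Rightarrow> nat) \<Rightarrow> ('v \<Rightarrow> nat)
     \<Rightarrow> ('v \<Rightarrow> nat \<Rightarrow> (nat \<times> nat) list) \<Rightarrow> ('v \<Rightarrow> nat \<Rightarrow> (nat \<times> nat) list) \<Rightarrow> bool" where
  "road_map Vs Vt r s t m u H V \<longleftrightarrow>
     (\<forall>\<alpha>\<in>Vt.
        (\<forall>p\<in>{1..u \<alpha>}. lattice_path (H \<alpha> p) \<and> in_grid (a_tgt m \<alpha>) (b_tgt r s t m \<alpha>) (H \<alpha> p)
            \<and> hd (H \<alpha> p) = (a_tgt m \<alpha> - u \<alpha> + p, 1) \<and> last (H \<alpha> p) = (p, b_tgt r s t m \<alpha>)) \<and>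
        (\<forall>p\<in>{1..u \<alpha>}. \<forall>p'\<in>{1..u \<alpha>}. p \<noteq> p' \<longrightarrow> set (H \<alpha> p) \<inter> set (H \<alpha> p') = {})) \<and>
     (\<forall>\<beta>\<in>Vs.
        (\<forall>q\<in>{1..u \<beta>}. lattice_path (V \<beta> q) \<and> in_grid (a_src r s t m \<beta>) (b_src m \<beta>) (V \<beta> q)
            \<and> hd (V \<beta> q) = (a_src r s t m \<beta>, q) \<and> last (V \<beta> q) = (1, b_src m \<beta> - u \<beta> + q)) \<and>
        (\<forall>q\<in>{1..u \<beta>}. \<forall>q'\<in>{1..u \<beta>}. q \<noteq> q' \<longrightarrow> set (V \<beta> q) \<inter> set (V \<beta> q') = {}))"

end

theory Submission
  imports Defs
begin

(* Fix a vertex and let S be the image of C in its a x b matrix. The length of the longest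
   diagonal chain of S inside the box [1,i] x [1,j], raised to a fixed boundary profile, is a
   level function on the grid that is monotone, grows by at most one along a diagonal step and
   by exactly one at the cells of S. If S has no chain of length u + 1 all levels are at most u,
   and for p = 1..u the cells where the level jumps diagonally from p - 1 to p form a lattice
   path from (a - u + p, 1) to (p, b). These u paths are disjoint and cover S; source vertices
   are handled by transposing. Conversely, a lattice path meets a diagonal chain in at most one
   cell, so u paths covering S leave no room for a chain of length u + 1. *)

definition diag_list :: "(nat \<times> nat) list \<Rightarrow> bool" where
  "diag_list xs \<longleftrightarrow> sorted_wrt (\<lambda>x y. fst x < fst y \<and> snd x < snd y) xs"

lemma diag_list_snoc:
  "diag_list (xs @ [z]) \<longleftrightarrow> diag_list xs \<and> (\<forall>x\<in>set xs. fst x < fst z \<and> snd x < snd z)"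
  by (auto simp: diag_list_def sorted_wrt_append)

lemma diag_list_distinct: "diag_list xs \<Longrightarrow> distinct xs"
  unfolding diag_list_def by (induction xs) auto

lemma diag_chain_set: "diag_list xs \<Longrightarrow> diag_chain (set xs)"
  unfolding diag_list_def diag_chain_def by (induction xs) auto

lemma length_diag_list_le:
  assumes "\<not> has_diag_chain (Suc n) T" "diag_list xs" "set xs \<subseteq> T"
  shows "length xs \<le> n"
proof (rule ccontr)
  assume "\<not> length xs \<le> n"
  define ys where "ys = take (Suc n) xs"
  have "diag_list ys"
    using assms(2) unfolding ys_def diag_list_def by (rule sorted_wrt_take)
  moreover have "card (set ys) = Suc n"
    using \<open>\<not> length xs \<le> n\<close> distinct_card[OF diag_list_distinct[OF \<open>diag_list ys\<close>]]
    by (simp add: ys_def)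
  moreover have "set ys \<subseteq> T"
    using assms(3) set_take_subset unfolding ys_def by fast
  ultimately have "has_diag_chain (Suc n) T"
    unfolding has_diag_chain_def using diag_chain_set finite_set by blast
  with assms(1) show False ..
qed

lemma diag_chain_swap:
  assumes "diag_chain D"
  shows "diag_chain (prod.swap ` D)"
  unfolding diag_chain_def
proof (intro ballI impI)
  fix x y
  assume "x \<in> prod.swap ` D" "y \<in> prod.swap ` D" "x \<noteq> y"
  then obtain x' y' where x': "x' \<in> D" "x = prod.swap x'" and y': "y' \<in> D" "y = prod.swap y'"
    by blast
  with \<open>x \<noteq> y\<close> have "x' \<noteq> y'"
    by blast
  with assms x'(1) y'(1) have "fst x' < fst y' \<and> snd x' < snd y' \<or> fst y' < fst x' \<and> snd y' < snd x'"
    unfolding diag_chain_def by blast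
  then show "fst x < fst y \<and> snd x < snd y \<or> fst y < fst x \<and> snd y < snd x"
    using x'(2) y'(2) by auto
qed

lemma has_diag_chain_swap:
  assumes "has_diag_chain n S"
  shows "has_diag_chain n (prod.swap ` S)"
proof -
  obtain D where D: "D \<subseteq> S" "finite D" "card D = n" "diag_chain D"
    using assms unfolding has_diag_chain_def by blast
  have "prod.swap ` D \<subseteq> prod.swap ` S" "finite (prod.swap ` D)" "card (prod.swap ` D) = n"
    using D(1-3) by (auto simp: card_image)
  with diag_chain_swap[OF D(4)] show ?thesis
    unfolding has_diag_chain_def by blast
qed

lemma lattice_path_nth_mono:
  assumes "lattice_path xs" "n \<le> n'" "n' < length xs"
  shows "fst (xs ! n') \<le> fst (xs ! n) \<and> snd (xs ! n) \<le> snd (xs ! n')"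
  using assms(2,3)
proof (induction n' rule: dec_induct)
  case base
  then show ?case by simp
next
  case (step k)
  then have "(fst (xs ! Suc k) = fst (xs ! k) \<and> snd (xs ! Suc k) = Suc (snd (xs ! k))) \<or>
      (Suc (fst (xs ! Suc k)) = fst (xs ! k) \<and> snd (xs ! Suc k) = snd (xs ! k))"
    using assms(1) unfolding lattice_path_def by blast
  then show ?case using step by auto
qed

lemma lattice_path_not_diag:
  assumes "lattice_path xs" "x \<in> set xs" "y \<in> set xs"
  shows "\<not> (fst x < fst y \<and> snd x < snd y)"
proof -
  obtain n n' where "n < length xs" "n' < length xs" "x = xs ! n" "y = xs ! n'"
    using assms(2,3) by (metis in_set_conv_nth)
  then show ?thesis
    using lattice_path_nth_mono[OF assms(1), of n n'] lattice_path_nth_mono[OF assms(1), of n' n]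
    by (cases "n \<le> n'") auto
qed

lemma card_diag_chain_inter_lattice_path:
  assumes "lattice_path xs" "diag_chain D"
  shows "card (D \<inter> set xs) \<le> 1"
proof -
  have "x = y" if "x \<in> D \<inter> set xs" "y \<in> D \<inter> set xs" for x y
    using that assms lattice_path_not_diag unfolding diag_chain_def by blast
  then show ?thesis
    using card_le_Suc0_iff_eq[of "D \<inter> set xs"] by auto
qed

lemma card_diag_chain_le_paths:
  assumes "D \<subseteq> (\<Union>p\<in>{1..n}. set (P p))" "diag_chain D" "\<forall>p\<in>{1..n}. lattice_path (P p)"
  shows "card D \<le> n"
proof -
  have "D = (\<Union>p\<in>{1..n}. D \<inter> set (P p))"
    using assms(1) by blast
  then have "card D \<le> (\<Sum>p\<in>{1..n}. card (D \<inter> set (P p)))"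
    by (metis card_UN_le finite_atLeastAtMost)
  also have "\<dots> \<le> (\<Sum>p\<in>{1..n}. 1)"
    using assms(2,3) by (intro sum_mono card_diag_chain_inter_lattice_path) auto
  finally show ?thesis by simp
qed

lemma not_has_diag_chain_if_covered:
  assumes "S \<subseteq> (\<Union>p\<in>{1..n}. set (P p))" "\<forall>p\<in>{1..n}. lattice_path (P p)"
  shows "\<not> has_diag_chain (Suc n) S"
proof
  assume "has_diag_chain (Suc n) S"
  then obtain D where D: "D \<subseteq> S" "card D = Suc n" "diag_chain D"
    unfolding has_diag_chain_def by blast
  have "card D \<le> n"
    using D(1) assms(1) by (intro card_diag_chain_le_paths[OF _ D(3) assms(2)]) (rule subset_trans)
  with D(2) show False
    by simp
qed

lemma lattice_path_rev_swap:
  assumes "lattice_path xs"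
  shows "lattice_path (rev (map prod.swap xs))"
  unfolding lattice_path_def
proof (intro conjI allI impI)
  show "rev (map prod.swap xs) \<noteq> []"
    using assms by (simp add: lattice_path_def)
next
  fix n
  assume n: "Suc n < length (rev (map prod.swap xs))"
  define k where "k = length xs - Suc (Suc n)"
  have "(fst (xs ! Suc k) = fst (xs ! k) \<and> snd (xs ! Suc k) = Suc (snd (xs ! k))) \<or>
      (Suc (fst (xs ! Suc k)) = fst (xs ! k) \<and> snd (xs ! Suc k) = snd (xs ! k))"
    using assms n unfolding lattice_path_def k_def by auto
  moreover have "rev (map prod.swap xs) ! n = prod.swap (xs ! Suc k)"
    and "rev (map prod.swap xs) ! Suc n = prod.swap (xs ! k)"
    using n by (auto simp: rev_nth k_def Suc_diff_Suc)
  ultimately show "fst (rev (map prod.swap xs) ! Suc n) = fst (rev (map prod.swap xs) ! n) \<and>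
      snd (rev (map prod.swap xs) ! Suc n) = Suc (snd (rev (map prod.swap xs) ! n)) \<or>
      Suc (fst (rev (map prod.swap xs) ! Suc n)) = fst (rev (map prod.swap xs) ! n) \<and>
      snd (rev (map prod.swap xs) ! Suc n) = snd (rev (map prod.swap xs) ! n)"
    by auto
qed

definition horizontal_paths :: "nat \<Rightarrow> nat \<Rightarrow> nat \<Rightarrow> (nat \<Rightarrow> (nat \<times> nat) list) \<Rightarrow> bool" where
  "horizontal_paths a b u P \<longleftrightarrow>
     (\<forall>p\<in>{1..u}. lattice_path (P p) \<and> in_grid a b (P p)
        \<and> hd (P p) = (a - u + p, 1) \<and> last (P p) = (p, b)) \<and>
     (\<forall>p\<in>{1..u}. \<forall>p'\<in>{1..u}. p \<noteq> p' \<longrightarrow> set (P p) \<inter> set (P p') = {})"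

definition vertical_paths :: "nat \<Rightarrow> nat \<Rightarrow> nat \<Rightarrow> (nat \<Rightarrow> (nat \<times> nat) list) \<Rightarrow> bool" where
  "vertical_paths a b u P \<longleftrightarrow>
     (\<forall>q\<in>{1..u}. lattice_path (P q) \<and> in_grid a b (P q)
        \<and> hd (P q) = (a, q) \<and> last (P q) = (1, b - u + q)) \<and>
     (\<forall>q\<in>{1..u}. \<forall>q'\<in>{1..u}. q \<noteq> q' \<longrightarrow> set (P q) \<inter> set (P q') = {})"

lemma road_map_iff:
  "road_map Vs Vt r s t m u H V \<longleftrightarrow>
     (\<forall>\<alpha>\<in>Vt. horizontal_paths (a_tgt m \<alpha>) (b_tgt r s t m \<alpha>) (u \<alpha>) (H \<alpha>)) \<and>
     (\<forall>\<beta>\<in>Vs. vertical_paths (a_src r s t m \<beta>) (b_src m \<beta>) (u \<beta>) (V \<beta>))"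
  unfolding road_map_def horizontal_paths_def vertical_paths_def by (rule refl)

lemma vertical_paths_transpose:
  assumes "horizontal_paths b a u P"
  shows "vertical_paths a b u (\<lambda>q. rev (map prod.swap (P q)))"
  unfolding vertical_paths_def
proof (intro conjI ballI impI)
  fix q
  assume "q \<in> {1..u}"
  then have P: "lattice_path (P q)" "in_grid b a (P q)" "hd (P q) = (b - u + q, 1)" "last (P q) = (q, a)"
    using assms by (auto simp: horizontal_paths_def)
  then have "P q \<noteq> []"
    by (simp add: lattice_path_def)
  with P show "lattice_path (rev (map prod.swap (P q)))"
    and "in_grid a b (rev (map prod.swap (P q)))"
    and "hd (rev (map prod.swap (P q))) = (a, q)"
    and "last (rev (map prod.swap (P q))) = (1, b - u + q)"
    by (auto simp: lattice_path_rev_swap in_grid_def hd_rev last_rev hd_map last_map)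
next
  fix q q'
  assume "q \<in> {1..u}" "q' \<in> {1..u}" "q \<noteq> q'"
  then have "set (P q) \<inter> set (P q') = {}"
    using assms unfolding horizontal_paths_def by blast
  then show "set (rev (map prod.swap (P q))) \<inter> set (rev (map prod.swap (P q'))) = {}"
    by auto
qed

locale chain_bounded_grid =
  fixes a b u :: nat and S :: "(nat \<times> nat) set"
  assumes u_pos: "0 < u" and u_le_a: "u \<le> a" and u_le_b: "u \<le> b"
    and S_grid: "S \<subseteq> {1..a} \<times> {1..b}"
    and no_long_chain: "\<not> has_diag_chain (Suc u) S"
begin

definition longest :: "nat \<Rightarrow> nat \<Rightarrow> nat" where
  "longest i j = Max {length xs | xs. diag_list xs \<and> set xs \<subseteq> S \<inter> ({..i} \<times> {..j})}"

lemma finite_chain_lengths: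
  "finite {length xs | xs. diag_list xs \<and> set xs \<subseteq> S \<inter> ({..i} \<times> {..j})}"
  by (rule finite_subset[of _ "{..u}"]) (auto dest: length_diag_list_le[OF no_long_chain])

lemma length_le_longest:
  "diag_list xs \<Longrightarrow> set xs \<subseteq> S \<inter> ({..i} \<times> {..j}) \<Longrightarrow> length xs \<le> longest i j"
  unfolding longest_def by (rule Max_ge[OF finite_chain_lengths]) blast

lemma longest_chain_exists:
  obtains xs where "diag_list xs" "set xs \<subseteq> S \<inter> ({..i} \<times> {..j})" "length xs = longest i j"
proof -
  have "diag_list [] \<and> set [] \<subseteq> S \<inter> ({..i} \<times> {..j})"
    by (simp add: diag_list_def)
  then have "longest i j \<in> {length xs | xs. diag_list xs \<and> set xs \<subseteq> S \<inter> ({..i} \<times> {..j})}"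
    unfolding longest_def by (intro Max_in[OF finite_chain_lengths]) blast
  then show ?thesis
    using that by auto
qed

lemma longest_le_u: "longest i j \<le> u"
  by (metis longest_chain_exists length_diag_list_le[OF no_long_chain] le_infE)

lemma longest_mono:
  assumes "i \<le> i'" "j \<le> j'"
  shows "longest i j \<le> longest i' j'"
proof -
  obtain xs where xs: "diag_list xs" "set xs \<subseteq> S \<inter> ({..i} \<times> {..j})" "length xs = longest i j"
    by (rule longest_chain_exists)
  then have "set xs \<subseteq> S \<inter> ({..i'} \<times> {..j'})"
    using assms by fastforce
  then show ?thesis
    using length_le_longest xs(1,3) by fastforce
qed

lemma longest_step: "longest i j \<le> Suc (longest (i - 1) (j - 1))"
proof -
  obtain xs where xs: "diag_list xs" "set xs \<subseteq> S \<inter> ({..i} \<times> {..j})" "length xs = longest i j"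
    by (rule longest_chain_exists)
  show ?thesis
  proof (cases xs rule: rev_cases)
    case Nil
    then show ?thesis using xs by simp
  next
    case (snoc ys z)
    have "diag_list ys" "\<forall>y\<in>set ys. fst y < fst z \<and> snd y < snd z"
      using xs(1) snoc by (simp_all add: diag_list_snoc)
    moreover have "fst z \<le> i" "snd z \<le> j"
      using xs(2) snoc by auto
    ultimately have "length ys \<le> longest (i - 1) (j - 1)"
      using xs(2) snoc by (intro length_le_longest) fastforce+
    then show ?thesis
      using xs(3) snoc by simp
  qed
qed

lemma longest_jump:
  assumes "x \<in> S"
  shows "Suc (longest (fst x - 1) (snd x - 1)) \<le> longest (fst x) (snd x)"
proof -
  obtain ys where ys: "diag_list ys" "set ys \<subseteq> S \<inter> ({..fst x - 1} \<times> {..snd x - 1})"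
    "length ys = longest (fst x - 1) (snd x - 1)"
    by (rule longest_chain_exists)
  have "1 \<le> fst x" "1 \<le> snd x"
    using assms S_grid by auto
  then have "\<forall>y\<in>set ys. fst y < fst x \<and> snd y < snd x"
    using ys(2) by fastforce
  then have "diag_list (ys @ [x])"
    using ys(1) by (simp add: diag_list_snoc)
  moreover have "set (ys @ [x]) \<subseteq> S \<inter> ({..fst x} \<times> {..snd x})"
    using ys(2) assms by fastforce
  ultimately show ?thesis
    using length_le_longest ys(3) by fastforce
qed

lemma longest_zero: "i = 0 \<or> j = 0 \<Longrightarrow> longest i j = 0"
proof -
  assume "i = 0 \<or> j = 0"
  then have "S \<inter> ({..i} \<times> {..j}) = {}"
    using S_grid by fastforce
  then show ?thesis
    by (metis longest_chain_exists list.size(3) set_empty subset_empty)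
qed

lemma longest_le_min: "longest i j \<le> min i j"
proof (induction i arbitrary: j)
  case 0
  then show ?case by (simp add: longest_zero)
next
  case (Suc i)
  have "longest i (j - 1) \<le> min i (j - 1)"
    by (rule Suc.IH)
  then show ?case
    using longest_step[of "Suc i" j] longest_zero[of "Suc i" j] by (cases "j = 0") auto
qed

(* Pins level i 0 = i - (a - u) and level i b = min i u, which puts the ends of the p-th contour
   at (a - u + p, 1) and (p, b). *)
definition boundary_level :: "nat \<Rightarrow> nat \<Rightarrow> nat" where
  "boundary_level i j = max (i - (a - u)) (min i (j - (b - u)))"

lemma boundary_level_mono: "i \<le> i' \<Longrightarrow> j \<le> j' \<Longrightarrow> boundary_level i j \<le> boundary_level i' j'"
  unfolding boundary_level_def by (intro max.mono min.mono diff_le_mono)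

lemma boundary_level_step: "boundary_level i j \<le> Suc (boundary_level (i - 1) (j - 1))"
proof -
  have "i - (a - u) \<le> Suc (i - 1 - (a - u))" "i \<le> Suc (i - 1)" "j - (b - u) \<le> Suc (j - 1 - (b - u))"
    by arith+
  then show ?thesis
    unfolding boundary_level_def by (metis max.mono min.mono max_Suc_Suc min_Suc_Suc)
qed

lemma boundary_level_jump:
  assumes "0 < boundary_level (Suc i) (Suc j)"
  shows "boundary_level (Suc i) (Suc j) = Suc (boundary_level i j)"
proof -
  have Suc_diff: "Suc n - c = Suc (n - c) \<or> Suc n - c = 0 \<and> n - c = 0" for n c :: nat
    by arith
  have "max x (min (Suc z) y) = Suc (max x' (min z y'))"
    if "x = Suc x' \<or> x = 0 \<and> x' = 0" "y = Suc y' \<or> y = 0 \<and> y' = 0" "0 < max x (min (Suc z) y)"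
    for x x' y y' z :: nat
    using that by (auto simp: max_def min_def)
  from this[OF Suc_diff Suc_diff] assms show ?thesis
    unfolding boundary_level_def by simp
qed

definition level :: "nat \<Rightarrow> nat \<Rightarrow> nat" where
  "level i j = max (longest i j) (boundary_level i j)"

lemma level_mono: "i \<le> i' \<Longrightarrow> j \<le> j' \<Longrightarrow> level i j \<le> level i' j'"
  unfolding level_def by (intro max.mono longest_mono boundary_level_mono)

lemma level_step: "level i j \<le> Suc (level (i - 1) (j - 1))"
  unfolding level_def using max.mono[OF longest_step boundary_level_step] by simp

lemma level_le_fst: "level i j \<le> i"
  using longest_le_min[of i j] unfolding level_def boundary_level_def by simp

lemma level_le_u:
  assumes "i \<le> a" "j \<le> b"
  shows "level i j \<le> u"
proof -
  have "i - (a - u) \<le> u" "j - (b - u) \<le> u"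
    using assms u_le_a u_le_b by arith+
  then show ?thesis
    using longest_le_u[of i j] unfolding level_def boundary_level_def by simp
qed

lemma level_snd_zero: "level i 0 = i - (a - u)"
  using longest_zero[of i 0] unfolding level_def boundary_level_def by simp

lemma level_snd_b:
  assumes "i \<le> a"
  shows "level i b = min i u"
proof -
  have "i - (a - u) \<le> min i u" "b - (b - u) = u"
    using assms u_le_a u_le_b by arith+
  then show ?thesis
    using longest_le_min[of i b] longest_le_u[of i b] unfolding level_def boundary_level_def by simp
qed

lemma level_jump:
  assumes "x \<in> S"
  shows "level (fst x) (snd x) = Suc (level (fst x - 1) (snd x - 1))"
proof -
  define i j where "i = fst x - 1" and "j = snd x - 1"
  have x: "x = (Suc i, Suc j)"
    using assms S_grid unfolding i_def j_def by (cases x) auto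
  have "longest (Suc i) (Suc j) = Suc (longest i j)"
    using longest_jump[OF assms] longest_step[of "Suc i" "Suc j"] x by simp
  moreover have "boundary_level i j \<le> boundary_level (Suc i) (Suc j)"
    by (rule boundary_level_mono) auto
  ultimately show ?thesis
    using boundary_level_jump[of i j] x unfolding level_def
    by (cases "boundary_level (Suc i) (Suc j) = 0") auto
qed

definition contour :: "nat \<Rightarrow> (nat \<times> nat) set" where
  "contour p = {(i, j). 1 \<le> i \<and> i \<le> a \<and> 1 \<le> j \<and> j \<le> b
                        \<and> level i j = p \<and> Suc (level (i - 1) (j - 1)) = p}"

definition antidiag :: "nat \<times> nat \<Rightarrow> nat" where
  "antidiag y = snd y + a - fst y"

lemma contour_not_diag:
  assumes "(i, j) \<in> contour p" "(i', j') \<in> contour p"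
  shows "\<not> (i < i' \<and> j < j')"
proof
  assume "i < i' \<and> j < j'"
  then have "level i j \<le> level (i' - 1) (j' - 1)"
    by (intro level_mono) auto
  then show False
    using assms by (simp add: contour_def)
qed

lemma contour_antidiag_inj:
  assumes "y \<in> contour p" "y' \<in> contour p" "antidiag y = antidiag y'"
  shows "y = y'"
proof -
  obtain i j i' j' where y: "y = (i, j)" and y': "y' = (i', j')"
    by fastforce
  have "i \<le> a" "i' \<le> a"
    using assms(1,2) y y' by (simp_all add: contour_def)
  then have ij: "j + i' = j' + i"
    using assms(3) y y' unfolding antidiag_def by simp
  consider "i < i'" | "i' < i" | "i = i'"
    by linarith
  then show ?thesis
  proof cases
    case 1
    then show ?thesis
      using ij contour_not_diag[of i j p i' j'] assms(1,2) y y' by simp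
  next
    case 2
    then show ?thesis
      using ij contour_not_diag[of i' j' p i j] assms(1,2) y y' by simp
  next
    case 3
    then show ?thesis
      using ij y y' by simp
  qed
qed

lemma contour_succ:
  assumes "(i, j) \<in> contour p" "(i, j) \<noteq> (p, b)"
  shows "\<exists>z\<in>contour p. antidiag z = Suc (antidiag (i, j)) \<and> (1 < i \<and> z = (i - 1, j) \<or> z = (i, Suc j))"
proof -
  have ij: "1 \<le> i" "i \<le> a" "1 \<le> j" "j \<le> b" "level i j = p" "Suc (level (i - 1) (j - 1)) = p"
    using assms(1) by (simp_all add: contour_def)
  have "level (i - 1) (j - 1) \<le> level (i - 1) j" "level (i - 1) j \<le> level i j"
    by (simp_all add: level_mono)
  then consider (north) "level (i - 1) j = p" | (east) "Suc (level (i - 1) j) = p"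
    using ij(5,6) by linarith
  then show ?thesis
  proof cases
    case north
    have "1 < i"
      using north ij(6) level_le_fst[of 0 j] by (cases "i = 1") auto
    moreover have "Suc (level (i - 1 - 1) (j - 1)) = p"
    proof -
      have "level (i - 1 - 1) (j - 1) \<le> level (i - 1) (j - 1)"
        by (rule level_mono) auto
      then show ?thesis
        using north ij(6) level_step[of "i - 1" j] by linarith
    qed
    moreover have "1 \<le> i - 1" "i - 1 \<le> a"
      using \<open>1 < i\<close> ij(2) by simp_all
    ultimately have "(i - 1, j) \<in> contour p"
      using north ij by (simp add: contour_def)
    moreover have "antidiag (i - 1, j) = Suc (antidiag (i, j))"
      using \<open>1 < i\<close> ij(2) by (simp add: antidiag_def)
    ultimately show ?thesis
      using \<open>1 < i\<close> by blast
  next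
    case east
    have "j \<noteq> b"
    proof
      assume "j = b"
      then have "Suc (min (i - 1) u) = min i u"
        using east ij(2,5) level_snd_b[of i] level_snd_b[of "i - 1"] by simp
      then have "i = p"
        using ij(1,5) \<open>j = b\<close> level_snd_b[of i] ij(2) by (simp add: min_def split: if_splits)
      then show False
        using assms(2) \<open>j = b\<close> by simp
    qed
    then have "level i (Suc j) = p"
      using east ij(4,5) level_mono[of i i j "Suc j"] level_step[of i "Suc j"] by simp
    then have "(i, Suc j) \<in> contour p"
      using east ij \<open>j \<noteq> b\<close> by (simp add: contour_def)
    moreover have "antidiag (i, Suc j) = Suc (antidiag (i, j))"
      using ij(2) by (simp add: antidiag_def)
    ultimately show ?thesis
      by blast
  qed
qed

lemma contour_start:
  assumes "1 \<le> p" "p \<le> u"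
  shows "(a - u + p, 1) \<in> contour p"
proof -
  define i where "i = a - u + p"
  have i: "1 \<le> i" "i \<le> a" "i - (a - u) = p"
    using assms u_le_a unfolding i_def by linarith+
  then have "level i 1 = p"
    using longest_le_min[of i 1] assms unfolding level_def boundary_level_def by auto
  moreover have "level (i - 1) 0 = p - 1"
    using i(3) by (simp add: level_snd_zero)
  ultimately show ?thesis
    using i(1,2) assms(1) u_pos u_le_b unfolding i_def[symmetric] by (simp add: contour_def)
qed

lemma contour_end:
  assumes "1 \<le> p" "p \<le> u"
  shows "(p, b) \<in> contour p"
proof -
  have "level p b = p"
    using assms u_le_a by (simp add: level_snd_b)
  moreover have "level (p - 1) (b - 1) = p - 1"
    using level_le_fst[of "p - 1" "b - 1"] assms u_le_b unfolding level_def boundary_level_def by auto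
  ultimately show ?thesis
    using assms u_le_a u_le_b by (simp add: contour_def)
qed

lemma antidiag_contour_bounds:
  assumes "y \<in> contour p"
  shows "p \<le> u" "u - p + 1 \<le> antidiag y" "antidiag y \<le> a + b - p"
proof -
  obtain i j where y: "y = (i, j)"
    by fastforce
  have ij: "1 \<le> i" "i \<le> a" "1 \<le> j" "j \<le> b" "level i j = p"
    using assms y by (simp_all add: contour_def)
  show "p \<le> u"
    using level_le_u[OF ij(2,4)] ij(5) by simp
  moreover have "i - (a - u) \<le> p" "p \<le> i"
    using ij(5) level_le_fst[of i j] by (auto simp: level_def boundary_level_def)
  ultimately show "u - p + 1 \<le> antidiag y" "antidiag y \<le> a + b - p"
    using ij(1-4) u_le_a unfolding y antidiag_def fst_conv snd_conv by linarith+
qed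

lemma contour_exists:
  assumes "1 \<le> p" "p \<le> u" "u - p + 1 \<le> k" "k \<le> a + b - p"
  shows "\<exists>y\<in>contour p. antidiag y = k"
  using assms(3,4)
proof (induction k rule: dec_induct)
  case base
  have "antidiag (a - u + p, 1) = u - p + 1"
    using assms(2) u_le_a by (simp add: antidiag_def)
  then show ?case
    using contour_start[OF assms(1,2)] by blast
next
  case (step k)
  then obtain i j where ij: "(i, j) \<in> contour p" "antidiag (i, j) = k"
    by fastforce
  have "antidiag (p, b) = a + b - p"
    using assms(2) u_le_a by (simp add: antidiag_def)
  then have "(i, j) \<noteq> (p, b)"
    using ij(2) step.hyps(2) step.prems by auto
  then show ?case
    using contour_succ[OF ij(1)] ij(2) by fastforce
qed

definition contour_point :: "nat \<Rightarrow> nat \<Rightarrow> nat \<times> nat" where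
  "contour_point p k = (THE y. y \<in> contour p \<and> antidiag y = k)"

lemma contour_point_antidiag:
  assumes "y \<in> contour p"
  shows "contour_point p (antidiag y) = y"
  unfolding contour_point_def using assms contour_antidiag_inj by blast

lemma contour_point_in_contour:
  assumes "1 \<le> p" "p \<le> u" "u - p + 1 \<le> k" "k \<le> a + b - p"
  shows "contour_point p k \<in> contour p" "antidiag (contour_point p k) = k"
  using contour_exists[OF assms] contour_point_antidiag by auto

(* Every step north or east raises the antidiagonal index by one, so listing a contour by that
   index yields a lattice path. *)

definition contour_path :: "nat \<Rightarrow> (nat \<times> nat) list" where
  "contour_path p = map (contour_point p) [u - p + 1..<Suc (a + b - p)]"

lemma set_contour_path:
  assumes "1 \<le> p" "p \<le> u"
  shows "set (contour_path p) = contour p"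
proof
  show "set (contour_path p) \<subseteq> contour p"
    using contour_point_in_contour(1)[OF assms] by (auto simp: contour_path_def simp del: upt_Suc)
  show "contour p \<subseteq> set (contour_path p)"
  proof
    fix y
    assume y: "y \<in> contour p"
    then have "antidiag y \<in> {u - p + 1..<Suc (a + b - p)}"
      using antidiag_contour_bounds(2,3)[OF y] by simp
    then have "contour_point p (antidiag y) \<in> set (contour_path p)"
      unfolding contour_path_def set_map set_upt by (rule imageI)
    then show "y \<in> set (contour_path p)"
      using contour_point_antidiag[OF y] by simp
  qed
qed

lemma lattice_path_contour_path:
  assumes "1 \<le> p" "p \<le> u"
  shows "lattice_path (contour_path p)"
  unfolding lattice_path_def
proof (intro conjI allI impI)
  show "contour_path p \<noteq> []"
    using assms u_le_a u_le_b by (simp add: contour_path_def)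
next
  fix n
  assume "Suc n < length (contour_path p)"
  moreover have "length (contour_path p) = a + b - u"
    using assms u_le_a by (simp add: contour_path_def del: upt_Suc)
  ultimately have n: "u - p + 1 + n < a + b - p"
    using assms u_le_a by linarith
  obtain i j where ij: "contour_point p (u - p + 1 + n) = (i, j)"
    by fastforce
  then have y: "(i, j) \<in> contour p" "antidiag (i, j) = u - p + 1 + n"
    using contour_point_in_contour[OF assms, of "u - p + 1 + n"] n by simp_all
  moreover have "antidiag (p, b) = a + b - p"
    using assms(2) u_le_a by (simp add: antidiag_def)
  ultimately have "(i, j) \<noteq> (p, b)"
    using n by auto
  then obtain z where z: "z \<in> contour p" "antidiag z = Suc (u - p + 1 + n)"
    and step: "1 < i \<and> z = (i - 1, j) \<or> z = (i, Suc j)"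
    using contour_succ[OF y(1)] y(2) by auto
  have "contour_path p ! n = (i, j)"
    using n ij by (simp add: contour_path_def nth_map_upt del: upt_Suc)
  moreover have "contour_path p ! Suc n = z"
    using n contour_point_antidiag[OF z(1)] z(2) by (simp add: contour_path_def nth_map_upt del: upt_Suc)
  ultimately show "fst (contour_path p ! Suc n) = fst (contour_path p ! n)
        \<and> snd (contour_path p ! Suc n) = Suc (snd (contour_path p ! n))
      \<or> Suc (fst (contour_path p ! Suc n)) = fst (contour_path p ! n)
        \<and> snd (contour_path p ! Suc n) = snd (contour_path p ! n)"
    using step by auto
qed

lemma contour_path_ends:
  assumes "1 \<le> p" "p \<le> u"
  shows "hd (contour_path p) = (a - u + p, 1)" "last (contour_path p) = (p, b)"
proof -
  have "u - p + 1 < Suc (a + b - p)"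
    using assms u_le_a u_le_b by linarith
  then have "hd (contour_path p) = contour_point p (u - p + 1)"
    and "last (contour_path p) = contour_point p (a + b - p)"
    by (simp_all add: contour_path_def hd_map last_map del: upt_Suc)
  moreover have "antidiag (a - u + p, 1) = u - p + 1" "antidiag (p, b) = a + b - p"
    using assms u_le_a by (simp_all add: antidiag_def)
  ultimately show "hd (contour_path p) = (a - u + p, 1)" "last (contour_path p) = (p, b)"
    using contour_point_antidiag[OF contour_start[OF assms]]
      contour_point_antidiag[OF contour_end[OF assms]] by simp_all
qed

lemma S_subset_contours: "S \<subseteq> (\<Union>p\<in>{1..u}. contour p)"
proof
  fix x
  assume "x \<in> S"
  obtain i j where x: "x = (i, j)"
    by fastforce
  have ij: "1 \<le> i" "i \<le> a" "1 \<le> j" "j \<le> b"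
    using \<open>x \<in> S\<close> S_grid x by auto
  have "level i j = Suc (level (i - 1) (j - 1))"
    using level_jump[OF \<open>x \<in> S\<close>] x by simp
  then have "x \<in> contour (level i j)" "level i j \<in> {1..u}"
    using ij level_le_u[OF ij(2,4)] x by (simp_all add: contour_def)
  then show "x \<in> (\<Union>p\<in>{1..u}. contour p)"
    by blast
qed

theorem contour_paths_cover:
  "horizontal_paths a b u contour_path \<and> S \<subseteq> (\<Union>p\<in>{1..u}. set (contour_path p))"
proof
  show "horizontal_paths a b u contour_path"
    unfolding horizontal_paths_def
  proof (intro conjI ballI impI)
    fix p
    assume "p \<in> {1..u}"
    then have p: "1 \<le> p" "p \<le> u"
      by simp_all
    show "lattice_path (contour_path p)"
      using lattice_path_contour_path[OF p] .
    show "in_grid a b (contour_path p)"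
      unfolding in_grid_def set_contour_path[OF p] by (auto simp: contour_def)
    show "hd (contour_path p) = (a - u + p, 1)" "last (contour_path p) = (p, b)"
      using contour_path_ends[OF p] .
  next
    fix p p'
    assume "p \<in> {1..u}" "p' \<in> {1..u}" "p \<noteq> p'"
    then show "set (contour_path p) \<inter> set (contour_path p') = {}"
      by (auto simp: set_contour_path contour_def)
  qed
  show "S \<subseteq> (\<Union>p\<in>{1..u}. set (contour_path p))"
    using S_subset_contours set_contour_path by auto
qed

end

lemma no_diag_chain_iff_horizontal_cover:
  assumes "0 < u" "u \<le> a" "u \<le> b" "S \<subseteq> {1..a} \<times> {1..b}"
  shows "\<not> has_diag_chain (Suc u) S \<longleftrightarrow>
    (\<exists>P. horizontal_paths a b u P \<and> S \<subseteq> (\<Union>p\<in>{1..u}. set (P p)))"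
proof
  assume "\<not> has_diag_chain (Suc u) S"
  with assms interpret chain_bounded_grid a b u S
    by unfold_locales
  show "\<exists>P. horizontal_paths a b u P \<and> S \<subseteq> (\<Union>p\<in>{1..u}. set (P p))"
    using contour_paths_cover by blast
next
  assume "\<exists>P. horizontal_paths a b u P \<and> S \<subseteq> (\<Union>p\<in>{1..u}. set (P p))"
  then obtain P where "horizontal_paths a b u P" and cover: "S \<subseteq> (\<Union>p\<in>{1..u}. set (P p))"
    by blast
  then have "\<forall>p\<in>{1..u}. lattice_path (P p)"
    unfolding horizontal_paths_def by blast
  with cover show "\<not> has_diag_chain (Suc u) S"
    by (rule not_has_diag_chain_if_covered)
qed

lemma no_diag_chain_iff_vertical_cover:
  assumes "0 < u" "u \<le> a" "u \<le> b" "S \<subseteq> {1..a} \<times> {1..b}"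
  shows "\<not> has_diag_chain (Suc u) S \<longleftrightarrow>
    (\<exists>P. vertical_paths a b u P \<and> S \<subseteq> (\<Union>q\<in>{1..u}. set (P q)))"
proof
  assume "\<not> has_diag_chain (Suc u) S"
  have "\<not> has_diag_chain (Suc u) (prod.swap ` S)"
  proof
    assume "has_diag_chain (Suc u) (prod.swap ` S)"
    then have "has_diag_chain (Suc u) S"
      using has_diag_chain_swap[of "Suc u" "prod.swap ` S"] by (simp add: image_image)
    with \<open>\<not> has_diag_chain (Suc u) S\<close> show False ..
  qed
  moreover have "prod.swap ` S \<subseteq> {1..b} \<times> {1..a}"
    using assms(4) by auto
  ultimately obtain P where "horizontal_paths b a u P" "prod.swap ` S \<subseteq> (\<Union>p\<in>{1..u}. set (P p))"
    using no_diag_chain_iff_horizontal_cover[of u b a] assms(1-3) by blast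
  have "S \<subseteq> (\<Union>q\<in>{1..u}. set (rev (map prod.swap (P q))))"
  proof
    fix x
    assume "x \<in> S"
    then obtain q where q: "q \<in> {1..u}" "prod.swap x \<in> set (P q)"
      using \<open>prod.swap ` S \<subseteq> (\<Union>p\<in>{1..u}. set (P p))\<close> by blast
    then have "x \<in> set (rev (map prod.swap (P q)))"
      using image_eqI[of x prod.swap "prod.swap x"] by simp
    with q(1) show "x \<in> (\<Union>q\<in>{1..u}. set (rev (map prod.swap (P q))))"
      by blast
  qed
  with vertical_paths_transpose[OF \<open>horizontal_paths b a u P\<close>] show "\<exists>P. vertical_paths a b u P \<and> S \<subseteq> (\<Union>q\<in>{1..u}. set (P q))"
    by blast
next
  assume "\<exists>P. vertical_paths a b u P \<and> S \<subseteq> (\<Union>q\<in>{1..u}. set (P q))"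
  then obtain P where "vertical_paths a b u P" and cover: "S \<subseteq> (\<Union>q\<in>{1..u}. set (P q))"
    by blast
  then have "\<forall>q\<in>{1..u}. lattice_path (P q)"
    unfolding vertical_paths_def by blast
  with cover show "\<not> has_diag_chain (Suc u) S"
    by (rule not_has_diag_chain_if_covered)
qed

lemma C_tgt_subset_grid:
  assumes "C \<subseteq> L_set r s t m"
  shows "C_tgt r s t m C \<alpha> \<subseteq> {1..a_tgt m \<alpha>} \<times> {1..b_tgt r s t m \<alpha>}"
proof
  fix x
  assume "x \<in> C_tgt r s t m C \<alpha>"
  then obtain i j k where x: "x = (i, coff s t m k + j)" "(i, j, k) \<in> L_set r s t m" "t k = \<alpha>"
    using assms unfolding C_tgt_def by blast
  then have k: "k \<in> {1..r}" "1 \<le> i" "i \<le> m \<alpha>" "1 \<le> j" "j \<le> m (s k)"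
    by (auto simp: L_set_def)
  have "coff s t m k + m (s k) = (\<Sum>k'\<in>insert k {k'\<in>{1..<k}. t k' = t k}. m (s k'))"
    unfolding coff_def by simp
  also have "\<dots> \<le> b_tgt r s t m \<alpha>"
    unfolding b_tgt_def using k(1) x(3) by (intro sum_mono2) auto
  finally show "x \<in> {1..a_tgt m \<alpha>} \<times> {1..b_tgt r s t m \<alpha>}"
    using x(1) k by (auto simp: a_tgt_def)
qed

lemma C_src_subset_grid:
  assumes "C \<subseteq> L_set r s t m"
  shows "C_src r s t m C \<beta> \<subseteq> {1..a_src r s t m \<beta>} \<times> {1..b_src m \<beta>}"
proof
  fix x
  assume "x \<in> C_src r s t m C \<beta>"
  then obtain i j k where x: "x = (roff s t m k + i, j)" "(i, j, k) \<in> L_set r s t m" "s k = \<beta>"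
    using assms unfolding C_src_def by blast
  then have k: "k \<in> {1..r}" "1 \<le> i" "i \<le> m (t k)" "1 \<le> j" "j \<le> m \<beta>"
    by (auto simp: L_set_def)
  have "roff s t m k + m (t k) = (\<Sum>k'\<in>insert k {k'\<in>{1..<k}. s k' = s k}. m (t k'))"
    unfolding roff_def by simp
  also have "\<dots> \<le> a_src r s t m \<beta>"
    unfolding a_src_def using k(1) x(3) by (intro sum_mono2) auto
  finally show "x \<in> {1..a_src r s t m \<beta>} \<times> {1..b_src m \<beta>}"
    using x(1) k by (auto simp: b_src_def)
qed

lemma restr_subset_tgt_paths_iff:
  assumes "C \<subseteq> L_set r s t m" "t ` {1..r} \<subseteq> A"
  shows "(\<forall>k\<in>{1..r}. restr C k \<subseteq> (\<Union>p\<in>{1..u (t k)}. restr_tgt_path s t m (H (t k) p) k)) \<longleftrightarrow>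
    (\<forall>\<alpha>\<in>A. C_tgt r s t m C \<alpha> \<subseteq> (\<Union>p\<in>{1..u \<alpha>}. set (H \<alpha> p)))"
proof
  assume cover: "\<forall>k\<in>{1..r}. restr C k \<subseteq> (\<Union>p\<in>{1..u (t k)}. restr_tgt_path s t m (H (t k) p) k)"
  show "\<forall>\<alpha>\<in>A. C_tgt r s t m C \<alpha> \<subseteq> (\<Union>p\<in>{1..u \<alpha>}. set (H \<alpha> p))"
  proof (intro ballI subsetI)
    fix \<alpha> x
    assume "x \<in> C_tgt r s t m C \<alpha>"
    then obtain i j k where x: "x = (i, coff s t m k + j)" "(i, j, k) \<in> C" "(i, j, k) \<in> L_set r s t m" "t k = \<alpha>"
      unfolding C_tgt_def by blast
    then have "k \<in> {1..r}" "(i, j) \<in> restr C k"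
      by (auto simp: L_set_def restr_def)
    then obtain p where "p \<in> {1..u \<alpha>}" "(i, j) \<in> restr_tgt_path s t m (H \<alpha> p) k"
      using cover x(4) by blast
    then show "x \<in> (\<Union>p\<in>{1..u \<alpha>}. set (H \<alpha> p))"
      using x(1) by (auto simp: restr_tgt_path_def)
  qed
next
  assume cover: "\<forall>\<alpha>\<in>A. C_tgt r s t m C \<alpha> \<subseteq> (\<Union>p\<in>{1..u \<alpha>}. set (H \<alpha> p))"
  show "\<forall>k\<in>{1..r}. restr C k \<subseteq> (\<Union>p\<in>{1..u (t k)}. restr_tgt_path s t m (H (t k) p) k)"
  proof (intro ballI subsetI)
    fix k x
    assume k: "k \<in> {1..r}" and "x \<in> restr C k"
    then obtain i j where x: "x = (i, j)" "(i, j, k) \<in> C"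
      by (auto simp: restr_def)
    then have "(i, j, k) \<in> L_set r s t m"
      using assms(1) by blast
    then have "in_page s t m k (i, j)" "(i, coff s t m k + j) \<in> C_tgt r s t m C (t k)"
      using x(2) by (force simp: L_set_def in_page_def C_tgt_def)+
    moreover have "t k \<in> A"
      using k assms(2) by blast
    ultimately obtain p where "p \<in> {1..u (t k)}" "(i, coff s t m k + j) \<in> set (H (t k) p)"
      using cover by blast
    then show "x \<in> (\<Union>p\<in>{1..u (t k)}. restr_tgt_path s t m (H (t k) p) k)"
      using \<open>in_page s t m k (i, j)\<close> x(1) by (auto simp: restr_tgt_path_def)
  qed
qed

lemma restr_subset_src_paths_iff:
  assumes "C \<subseteq> L_set r s t m" "s ` {1..r} \<subseteq> B"
  shows "(\<forall>k\<in>{1..r}. restr C k \<subseteq> (\<Union>q\<in>{1..u (s k)}. restr_src_path s t m (V (s k) q) k)) \<longleftrightarrow>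
    (\<forall>\<beta>\<in>B. C_src r s t m C \<beta> \<subseteq> (\<Union>q\<in>{1..u \<beta>}. set (V \<beta> q)))"
proof
  assume cover: "\<forall>k\<in>{1..r}. restr C k \<subseteq> (\<Union>q\<in>{1..u (s k)}. restr_src_path s t m (V (s k) q) k)"
  show "\<forall>\<beta>\<in>B. C_src r s t m C \<beta> \<subseteq> (\<Union>q\<in>{1..u \<beta>}. set (V \<beta> q))"
  proof (intro ballI subsetI)
    fix \<beta> x
    assume "x \<in> C_src r s t m C \<beta>"
    then obtain i j k where x: "x = (roff s t m k + i, j)" "(i, j, k) \<in> C" "(i, j, k) \<in> L_set r s t m" "s k = \<beta>"
      unfolding C_src_def by blast
    then have "k \<in> {1..r}" "(i, j) \<in> restr C k"
      by (auto simp: L_set_def restr_def)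
    then obtain q where "q \<in> {1..u \<beta>}" "(i, j) \<in> restr_src_path s t m (V \<beta> q) k"
      using cover x(4) by blast
    then show "x \<in> (\<Union>q\<in>{1..u \<beta>}. set (V \<beta> q))"
      using x(1) by (auto simp: restr_src_path_def)
  qed
next
  assume cover: "\<forall>\<beta>\<in>B. C_src r s t m C \<beta> \<subseteq> (\<Union>q\<in>{1..u \<beta>}. set (V \<beta> q))"
  show "\<forall>k\<in>{1..r}. restr C k \<subseteq> (\<Union>q\<in>{1..u (s k)}. restr_src_path s t m (V (s k) q) k)"
  proof (intro ballI subsetI)
    fix k x
    assume k: "k \<in> {1..r}" and "x \<in> restr C k"
    then obtain i j where x: "x = (i, j)" "(i, j, k) \<in> C"
      by (auto simp: restr_def)
    then have "(i, j, k) \<in> L_set r s t m"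
      using assms(1) by blast
    then have "in_page s t m k (i, j)" "(roff s t m k + i, j) \<in> C_src r s t m C (s k)"
      using x(2) by (force simp: L_set_def in_page_def C_src_def)+
    moreover have "s k \<in> B"
      using k assms(2) by blast
    ultimately obtain q where "q \<in> {1..u (s k)}" "(roff s t m k + i, j) \<in> set (V (s k) q)"
      using cover by blast
    then show "x \<in> (\<Union>q\<in>{1..u (s k)}. restr_src_path s t m (V (s k) q) k)"
      using \<open>in_page s t m k (i, j)\<close> x(1) by (auto simp: restr_src_path_def)
  qed
qed

theorem lemma2p8:
  fixes Vs Vt :: "'v set" and r :: nat and s t :: "nat \<Rightarrow> 'v" and m u :: "'v \<Rightarrow> nat"
    and C :: "(nat \<times> nat \<times> nat) set"
  assumes fin: "finite Vs" "finite Vt"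
    and disj: "Vs \<inter> Vt = {}"
    and arrows: "\<forall>k\<in>{1..r}. s k \<in> Vs \<and> t k \<in> Vt"
    and u_tgt: "\<forall>\<alpha>\<in>Vt. 0 < u \<alpha> \<and> u \<alpha> \<le> min (a_tgt m \<alpha>) (b_tgt r s t m \<alpha>) \<and> u \<alpha> \<le> v_tgt r s t u \<alpha>"
    and u_src: "\<forall>\<beta>\<in>Vs. 0 < u \<beta> \<and> u \<beta> \<le> min (a_src r s t m \<beta>) (b_src m \<beta>) \<and> u \<beta> \<le> v_src r s t u \<beta>"
    and CL: "C \<subseteq> L_set r s t m"
  shows "u_compatible Vs Vt r s t m u C \<longleftrightarrow>
    (\<exists>H V. road_map Vs Vt r s t m u H V \<and>
       (\<forall>k\<in>{1..r}. restr C k \<subseteq>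
          (\<Union>p\<in>{1..u (t k)}. restr_tgt_path s t m (H (t k) p) k) \<inter>
          (\<Union>q\<in>{1..u (s k)}. restr_src_path s t m (V (s k) q) k)))"
proof -
  have tgt: "\<not> has_diag_chain (u \<alpha> + 1) (C_tgt r s t m C \<alpha>) \<longleftrightarrow>
      (\<exists>P. horizontal_paths (a_tgt m \<alpha>) (b_tgt r s t m \<alpha>) (u \<alpha>) P
        \<and> C_tgt r s t m C \<alpha> \<subseteq> (\<Union>p\<in>{1..u \<alpha>}. set (P p)))" if "\<alpha> \<in> Vt" for \<alpha>
    using no_diag_chain_iff_horizontal_cover[OF _ _ _ C_tgt_subset_grid[OF CL]] u_tgt that by simp
  have src: "\<not> has_diag_chain (u \<beta> + 1) (C_src r s t m C \<beta>) \<longleftrightarrow>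
      (\<exists>P. vertical_paths (a_src r s t m \<beta>) (b_src m \<beta>) (u \<beta>) P
        \<and> C_src r s t m C \<beta> \<subseteq> (\<Union>q\<in>{1..u \<beta>}. set (P q)))" if "\<beta> \<in> Vs" for \<beta>
    using no_diag_chain_iff_vertical_cover[OF _ _ _ C_src_subset_grid[OF CL]] u_src that by simp
  have "t ` {1..r} \<subseteq> Vt" "s ` {1..r} \<subseteq> Vs"
    using arrows by auto
  note covers = restr_subset_tgt_paths_iff[OF CL this(1)] restr_subset_src_paths_iff[OF CL this(2)]
  have compatible_iff: "u_compatible Vs Vt r s t m u C \<longleftrightarrow>
      (\<forall>\<alpha>\<in>Vt. \<exists>P. horizontal_paths (a_tgt m \<alpha>) (b_tgt r s t m \<alpha>) (u \<alpha>) P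
        \<and> C_tgt r s t m C \<alpha> \<subseteq> (\<Union>p\<in>{1..u \<alpha>}. set (P p))) \<and>
      (\<forall>\<beta>\<in>Vs. \<exists>P. vertical_paths (a_src r s t m \<beta>) (b_src m \<beta>) (u \<beta>) P
        \<and> C_src r s t m C \<beta> \<subseteq> (\<Union>q\<in>{1..u \<beta>}. set (P q)))"
    unfolding u_compatible_def using tgt src by (intro conj_cong ball_cong) simp_all
  show ?thesis
    unfolding compatible_iff bchoice_iff ball_conj_distrib road_map_iff Int_subset_iff covers by blast
qed

end
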